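(* Let $P,K:\mathbb{N}_0\to\mathbb{N}_0$ be a scaling with $\lim_{n\to\infty}K_n^2/P_n=0$. Then $\beta(\theta_n)\sim\tau(\theta_n)$ as $n\to\infty$, where $\tau(\theta_n)=\frac{K_n^3}{P_n^2}+\left(\frac{K_n^2}{P_n}\right)^3$.
   Context: For positive integers $K\le P$, $\theta=(K,P)$: $q(\theta)=\binom{P-K}{K}/\binom{P}{K}$ if $2K\le P$ and $q(\theta)=0$ if $P<2K$; $r(\theta)=\binom{P-2K}{K}/\binom{P}{K}$ if $3K\le P$ and $r(\theta)=0$ if $P<3K$; $\beta(\theta)=(1-q(\theta))^3+q(\theta)^3-q(\theta)r(\theta)$ (this is the probability that three given nodes form a triangle in the random key graph in which each node receives a uniformly random $K$-subset of $\{1,\dots,P\}$ independently, and two nodes are adjacent iff their subsets intersect); $\tau(\theta)=K^3/P^2+(K^2/P)^3$. A scaling is a pair of functions $P,K:\mathbb{N}_0\to\mathbb{N}_0$ with $1\le K_n\le P_n$ for all $n$, and $\theta_n=(K_n,P_n)$. Asymptotic equivalence $a_n\sim b_n$ means $a_n/b_n\to1$. *)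

theory Defs
  imports "HOL-Analysis.Analysis"
begin

definition q_rkg :: "nat \<Rightarrow> nat \<Rightarrow> real" where
  "q_rkg K P = (if 2 * K \<le> P then real ((P - K) choose K) / real (P choose K) else 0)"

definition r_rkg :: "nat \<Rightarrow> nat \<Rightarrow> real" where
  "r_rkg K P = (if 3 * K \<le> P then real ((P - 2 * K) choose K) / real (P choose K) else 0)"

definition beta_rkg :: "nat \<Rightarrow> nat \<Rightarrow> real" where
  "beta_rkg K P = (1 - q_rkg K P) ^ 3 + q_rkg K P ^ 3 - q_rkg K P * r_rkg K P"

definition tau_rkg :: "nat \<Rightarrow> nat \<Rightarrow> real" where
  "tau_rkg K P = real K ^ 3 / real P ^ 2 + (real K ^ 2 / real P) ^ 3"

end

theory Submission
  imports Defs
begin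

text \<open>Put \<open>u = K\<^sup>2/P\<close> and \<open>w = K/P\<close>. Expanding the binomial ratios gives
  \<open>q = \<Prod>i<K. 1 - K/(P-i)\<close> and \<open>r = q\<^sup>2 s\<close> with \<open>s = \<Prod>i<K. 1 - (K/(P-K-i))\<^sup>2\<close>, so
  \<open>\<beta> = (1-q)\<^sup>3 + q\<^sup>3 (1-s)\<close> while \<open>\<tau> = u\<^sup>3 + uw\<close>. Second-order Bonferroni bounds on these
  products give \<open>1 - q \<sim> u\<close> and \<open>1 - s \<sim> uw\<close> as \<open>u \<rightarrow> 0\<close>, so \<open>\<beta>/\<tau>\<close> is a weighted mean
  of two quantities tending to \<open>1\<close>.\<close>

lemma binomial_ratio_eq_prod:
  assumes "k \<le> m" "k \<le> n"
  shows "real (m choose k) / real (n choose k) = (\<Prod>i<k. real (m - i) / real (n - i))"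
proof -
  have "real (m choose k) / real (n choose k)
      = (\<Prod>i = 0..<k. real (m - i) / real (k - i)) / (\<Prod>i = 0..<k. real (n - i) / real (k - i))"
    using assms by (simp add: binomial_altdef_of_nat)
  also have "\<dots> = (\<Prod>i = 0..<k. (real (m - i) / real (k - i)) / (real (n - i) / real (k - i)))"
    by (simp add: prod_dividef)
  also have "\<dots> = (\<Prod>i = 0..<k. real (m - i) / real (n - i))"
    by (rule prod.cong) auto
  finally show ?thesis by (simp add: atLeast0LessThan)
qed

lemma one_minus_power_le:
  fixes x :: real
  assumes "0 \<le> x" "x \<le> 1"
  shows "(1 - x) ^ n \<le> 1 - n * x + (n * x)\<^sup>2 / 2"
proof (induction n)
  case (Suc n)
  have "(1 - x) ^ Suc n \<le> (1 - x) * (1 - n * x + (n * x)\<^sup>2 / 2)"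
    using Suc assms by (simp add: mult_left_mono)
  also have "\<dots> \<le> 1 - Suc n * x + (Suc n * x)\<^sup>2 / 2"
  proof -
    have "0 \<le> x * (n * x)\<^sup>2 / 2 + x\<^sup>2 / 2" using assms by simp
    then show ?thesis by (simp add: algebra_simps power2_eq_square)
  qed
  finally show ?case .
qed simp

lemma one_minus_prod_bounds:
  fixes y :: "nat \<Rightarrow> real"
  assumes y: "\<And>i. i < k \<Longrightarrow> c \<le> y i \<and> y i \<le> d" and "0 \<le> c" "d \<le> 1"
  shows "k * c - (k * c)\<^sup>2 / 2 \<le> 1 - (\<Prod>i<k. 1 - y i)"
    and "1 - (\<Prod>i<k. 1 - y i) \<le> k * d"
proof -
  show "k * c - (k * c)\<^sup>2 / 2 \<le> 1 - (\<Prod>i<k. 1 - y i)"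
  proof (cases "k = 0")
    case False
    have "(\<Prod>i<k. 1 - y i) \<le> (1 - c) ^ k"
      using y \<open>0 \<le> c\<close> \<open>d \<le> 1\<close> prod_mono[of "{..<k}" "\<lambda>i. 1 - y i" "\<lambda>_. 1 - c"] by force
    also have "\<dots> \<le> 1 - k * c + (k * c)\<^sup>2 / 2"
      using y[of 0] False \<open>0 \<le> c\<close> \<open>d \<le> 1\<close> by (intro one_minus_power_le) auto
    finally show ?thesis by simp
  qed simp
  show "1 - (\<Prod>i<k. 1 - y i) \<le> k * d"
  proof (cases "k = 0")
    case False
    have "1 - k * d \<le> (1 - d) ^ k"
      using Bernoulli_inequality[of "-d" k] y[of 0] False \<open>0 \<le> c\<close> \<open>d \<le> 1\<close> by simp
    also have "\<dots> \<le> (\<Prod>i<k. 1 - y i)"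
      using y \<open>d \<le> 1\<close> prod_mono[of "{..<k}" "\<lambda>_. 1 - d" "\<lambda>i. 1 - y i"] by force
    finally show ?thesis by simp
  qed simp
qed

lemma q_rkg_eq_prod:
  assumes "2 * K \<le> P"
  shows "q_rkg K P = (\<Prod>i<K. 1 - real K / (real P - real i))"
proof -
  have "q_rkg K P = (\<Prod>i<K. real (P - K - i) / real (P - i))"
    using assms by (simp add: q_rkg_def binomial_ratio_eq_prod)
  also have "\<dots> = (\<Prod>i<K. 1 - real K / (real P - real i))"
  proof (rule prod.cong)
    fix i assume "i \<in> {..<K}"
    with assms have "real (P - K - i) = P - real K - i" "real (P - i) = P - real i" "P - real i > 0"
      by (auto simp: of_nat_diff)
    then show "real (P - K - i) / real (P - i) = 1 - real K / (real P - real i)"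
      by (simp add: field_simps)
  qed simp
  finally show ?thesis .
qed

text \<open>Factors of \<open>r/q\<^sup>2\<close>: \<open>(P-2K-i)(P-i) = (P-K-i)\<^sup>2 - K\<^sup>2\<close>.\<close>

definition s_rkg :: "nat \<Rightarrow> nat \<Rightarrow> real" where
  "s_rkg K P = (\<Prod>i<K. 1 - (real K / (real P - real K - real i))\<^sup>2)"

lemma r_rkg_eq_q_rkg_s_rkg:
  assumes "3 * K \<le> P"
  shows "r_rkg K P = q_rkg K P ^ 2 * s_rkg K P"
proof -
  have "r_rkg K P = (\<Prod>i<K. real (P - 2 * K - i) / real (P - i))"
    using assms by (simp add: r_rkg_def binomial_ratio_eq_prod)
  also have "\<dots> = (\<Prod>i<K. (real (P - K - i) / real (P - i))\<^sup>2 * (1 - (K / (P - real K - i))\<^sup>2))"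
  proof (rule prod.cong)
    have factor: "(a - k) / (a + k) = (a / (a + k))\<^sup>2 * (1 - (k / a)\<^sup>2)" if "a > 0" "a + k > 0"
      for a k :: real
    proof -
      have "1 - (k / a)\<^sup>2 = (a - k) * (a + k) / a\<^sup>2"
        using that by (simp add: field_simps power2_eq_square)
      then show ?thesis
        using that by (simp add: power_divide power2_eq_square)
    qed
    fix i assume "i \<in> {..<K}"
    with assms have "real (P - 2 * K - i) = (P - real K - i) - K" "real (P - K - i) = P - real K - i"
        "real (P - i) = (P - real K - i) + K" "P - real K - i > 0"
      by (auto simp: of_nat_diff)
    then show "real (P - 2 * K - i) / real (P - i)
        = (real (P - K - i) / real (P - i))\<^sup>2 * (1 - (K / (P - real K - i))\<^sup>2)"
      using factor[of "P - real K - i" K] by simp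
  qed simp
  also have "\<dots> = q_rkg K P ^ 2 * s_rkg K P"
    using assms by (simp add: q_rkg_def s_rkg_def binomial_ratio_eq_prod prod.distrib prod_power_distrib)
  finally show ?thesis .
qed

lemma one_minus_q_rkg_bounds:
  assumes "2 * K \<le> P"
  shows "real K ^ 2 / P - (real K ^ 2 / P)\<^sup>2 / 2 \<le> 1 - q_rkg K P"
    and "1 - q_rkg K P \<le> (real K ^ 2 / P) / (1 - real K / P)"
proof -
  have y: "K / P \<le> K / (P - real i) \<and> K / (P - real i) \<le> K / (P - real K)" if "i < K" for i
    using that assms by (intro conjI divide_left_mono) auto
  have d: "K / (P - real K) \<le> 1" using assms by (auto simp: divide_le_eq_1)
  have c: "real K * (K / P) = real K ^ 2 / P" by (simp add: power2_eq_square)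
  have dK: "real K * (K / (P - real K)) = (real K ^ 2 / P) / (1 - real K / P)"
    using assms by (cases "K = 0") (simp_all add: field_simps power2_eq_square)
  have "real K * (K / P) - (real K * (K / P))\<^sup>2 / 2 \<le> 1 - q_rkg K P"
    "1 - q_rkg K P \<le> real K * (K / (P - real K))"
    unfolding q_rkg_eq_prod[OF assms] using one_minus_prod_bounds[OF y _ d] by simp_all
  then show "real K ^ 2 / P - (real K ^ 2 / P)\<^sup>2 / 2 \<le> 1 - q_rkg K P"
    "1 - q_rkg K P \<le> (real K ^ 2 / P) / (1 - real K / P)"
    unfolding c dK by simp_all
qed

lemma one_minus_s_rkg_bounds:
  assumes "3 * K \<le> P"
  shows "real K ^ 3 / (real P)\<^sup>2 - (real K ^ 3 / (real P)\<^sup>2)\<^sup>2 / 2 \<le> 1 - s_rkg K P"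
    and "1 - s_rkg K P \<le> (real K ^ 3 / (real P)\<^sup>2) / (1 - 2 * real K / P)\<^sup>2"
proof -
  have y: "(K / P)\<^sup>2 \<le> (K / (P - real K - i))\<^sup>2 \<and> (K / (P - real K - i))\<^sup>2 \<le> (K / (P - 2 * real K))\<^sup>2"
    if "i < K" for i
    using that assms by (intro conjI power_mono divide_left_mono) auto
  have d: "(K / (P - 2 * real K))\<^sup>2 \<le> 1" using assms by (intro power_le_one) (auto simp: divide_le_eq_1)
  have c: "real K * (K / P)\<^sup>2 = real K ^ 3 / (real P)\<^sup>2" by (simp add: power2_eq_square power3_eq_cube)
  have dK: "real K * (K / (P - 2 * real K))\<^sup>2 = (real K ^ 3 / (real P)\<^sup>2) / (1 - 2 * real K / P)\<^sup>2"
    using assms by (cases "K = 0") (simp_all add: field_simps power2_eq_square power3_eq_cube)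
  have "real K * (K / P)\<^sup>2 - (real K * (K / P)\<^sup>2)\<^sup>2 / 2 \<le> 1 - s_rkg K P"
    "1 - s_rkg K P \<le> real K * (K / (P - 2 * real K))\<^sup>2"
    unfolding s_rkg_def using one_minus_prod_bounds[OF y _ d] by simp_all
  then show "real K ^ 3 / (real P)\<^sup>2 - (real K ^ 3 / (real P)\<^sup>2)\<^sup>2 / 2 \<le> 1 - s_rkg K P"
    "1 - s_rkg K P \<le> (real K ^ 3 / (real P)\<^sup>2) / (1 - 2 * real K / P)\<^sup>2"
    unfolding c dK by simp_all
qed

lemma beta_rkg_eq:
  assumes "3 * K \<le> P"
  shows "beta_rkg K P = (1 - q_rkg K P) ^ 3 + q_rkg K P ^ 3 * (1 - s_rkg K P)"
  using assms by (simp add: beta_rkg_def r_rkg_eq_q_rkg_s_rkg algebra_simps power2_eq_square power3_eq_cube)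

lemma tendsto_ratio_one_second_order:
  fixes a c x :: "'a \<Rightarrow> real"
  assumes bounds: "\<forall>\<^sub>F n in F. 0 < a n \<and> a n - (a n)\<^sup>2 / 2 \<le> x n \<and> x n \<le> a n / c n"
    and a: "(a \<longlongrightarrow> 0) F" and c: "(c \<longlongrightarrow> 1) F"
  shows "((\<lambda>n. x n / a n) \<longlongrightarrow> 1) F"
proof (rule tendsto_sandwich)
  show "\<forall>\<^sub>F n in F. 1 - a n / 2 \<le> x n / a n"
    using bounds by eventually_elim (simp add: field_simps power2_eq_square)
  show "\<forall>\<^sub>F n in F. x n / a n \<le> 1 / c n"
    using bounds
  proof eventually_elim
    case (elim n)
    then have "x n / a n \<le> (a n / c n) / a n" by (intro divide_right_mono) auto
    with elim show ?case by simp
  qed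
  show "((\<lambda>n. 1 - a n / 2) \<longlongrightarrow> 1) F" "((\<lambda>n. 1 / c n) \<longlongrightarrow> 1) F"
    using a c by (auto intro!: tendsto_eq_intros)
qed

lemma tendsto_weighted_mean:
  fixes x y s t :: "'a \<Rightarrow> real"
  assumes x: "(x \<longlongrightarrow> l) F" and y: "(y \<longlongrightarrow> l) F"
    and pos: "\<forall>\<^sub>F n in F. 0 < s n \<and> 0 < t n"
  shows "((\<lambda>n. (s n * x n + t n * y n) / (s n + t n)) \<longlongrightarrow> l) F"
proof -
  have "((\<lambda>n. (s n * x n + t n * y n) / (s n + t n) - l) \<longlongrightarrow> 0) F"
  proof (rule Lim_null_comparison)
    show "\<forall>\<^sub>F n in F. norm ((s n * x n + t n * y n) / (s n + t n) - l) \<le> \<bar>x n - l\<bar> + \<bar>y n - l\<bar>"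
      using pos
    proof eventually_elim
      case (elim n)
      then have "(s n * x n + t n * y n) / (s n + t n) - l = (s n * (x n - l) + t n * (y n - l)) / (s n + t n)"
        by (simp add: field_simps)
      also have "\<bar>\<dots>\<bar> \<le> (s n * \<bar>x n - l\<bar> + t n * \<bar>y n - l\<bar>) / (s n + t n)"
        using elim by (simp add: abs_mult divide_right_mono abs_triangle_ineq[THEN order_trans])
      also have "\<dots> \<le> \<bar>x n - l\<bar> + \<bar>y n - l\<bar>"
        using elim by (simp add: field_simps mult_right_mono)
      finally show ?case by simp
    qed
    show "((\<lambda>n. \<bar>x n - l\<bar> + \<bar>y n - l\<bar>) \<longlongrightarrow> 0) F"
      using tendsto_add[OF tendsto_rabs_zero[OF x[THEN LIM_zero]] tendsto_rabs_zero[OF y[THEN LIM_zero]]]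
      by simp
  qed
  then show ?thesis by (rule LIM_zero_cancel)
qed

lemma eventually_mult_le_if_sq_div_tendsto_0:
  fixes K P :: "'a \<Rightarrow> nat"
  assumes "\<And>n. K n \<le> P n" and "((\<lambda>n. real (K n) ^ 2 / real (P n)) \<longlongrightarrow> 0) F"
  shows "\<forall>\<^sub>F n in F. m * K n \<le> P n"
proof -
  have "\<forall>\<^sub>F n in F. real (K n) ^ 2 / real (P n) < 1 / (m + 1)"
    using order_tendstoD(2)[OF assms(2)] by simp
  then show ?thesis
  proof eventually_elim
    case (elim n)
    show ?case
    proof (cases "K n = 0")
      case False
      with assms(1)[of n] have "P n > 0" by simp
      with elim have "(m + 1) * real (K n) ^ 2 < P n" by (simp add: field_simps)
      moreover have "m * real (K n) \<le> (m + 1) * real (K n) ^ 2"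
        using False by (intro mult_mono) (auto simp: power2_eq_square)
      ultimately have "real m * real (K n) < real (P n)" by linarith
      then show ?thesis by (simp flip: of_nat_mult)
    qed simp
  qed
qed

lemma K_div_P_tendsto_0:
  fixes K P :: "'a \<Rightarrow> nat"
  assumes "\<And>n. 1 \<le> K n" and "((\<lambda>n. real (K n) ^ 2 / real (P n)) \<longlongrightarrow> 0) F"
  shows "((\<lambda>n. real (K n) / real (P n)) \<longlongrightarrow> 0) F"
proof (rule tendsto_sandwich[OF _ _ tendsto_const assms(2)])
  have "real (K n) \<le> real (K n) ^ 2" for n
    using assms(1)[of n] by (simp add: power2_eq_square)
  then show "\<forall>\<^sub>F n in F. real (K n) / real (P n) \<le> real (K n) ^ 2 / real (P n)"
    by (simp add: divide_right_mono)
qed simp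

lemma one_minus_q_rkg_asymp:
  fixes K P :: "'a \<Rightarrow> nat"
  assumes scaling: "\<And>n. 1 \<le> K n \<and> K n \<le> P n"
    and lim: "((\<lambda>n. real (K n) ^ 2 / real (P n)) \<longlongrightarrow> 0) F"
  shows "((\<lambda>n. (1 - q_rkg (K n) (P n)) / (real (K n) ^ 2 / real (P n))) \<longlongrightarrow> 1) F"
proof (rule tendsto_ratio_one_second_order[OF _ lim])
  have pos: "0 < K n" "0 < P n" for n using scaling[of n] by auto
  have "\<forall>\<^sub>F n in F. 2 * K n \<le> P n"
    using scaling lim by (intro eventually_mult_le_if_sq_div_tendsto_0) auto
  then show "\<forall>\<^sub>F n in F. 0 < real (K n) ^ 2 / real (P n)
      \<and> real (K n) ^ 2 / real (P n) - (real (K n) ^ 2 / real (P n))\<^sup>2 / 2 \<le> 1 - q_rkg (K n) (P n)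
      \<and> 1 - q_rkg (K n) (P n) \<le> real (K n) ^ 2 / real (P n) / (1 - real (K n) / real (P n))"
    by eventually_elim (use pos one_minus_q_rkg_bounds in \<open>auto intro!: divide_pos_pos\<close>)
  show "((\<lambda>n. 1 - real (K n) / real (P n)) \<longlongrightarrow> 1) F"
    using tendsto_diff[OF tendsto_const K_div_P_tendsto_0[OF _ lim], of 1] scaling by simp
qed

lemma one_minus_s_rkg_asymp:
  fixes K P :: "'a \<Rightarrow> nat"
  assumes scaling: "\<And>n. 1 \<le> K n \<and> K n \<le> P n"
    and lim: "((\<lambda>n. real (K n) ^ 2 / real (P n)) \<longlongrightarrow> 0) F"
  shows "((\<lambda>n. (1 - s_rkg (K n) (P n)) / (real (K n) ^ 3 / (real (P n))\<^sup>2)) \<longlongrightarrow> 1) F"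
proof (rule tendsto_ratio_one_second_order)
  have pos: "0 < K n" "0 < P n" for n using scaling[of n] by auto
  have "\<forall>\<^sub>F n in F. 3 * K n \<le> P n"
    using scaling lim by (intro eventually_mult_le_if_sq_div_tendsto_0) auto
  then show "\<forall>\<^sub>F n in F. 0 < real (K n) ^ 3 / (real (P n))\<^sup>2
      \<and> real (K n) ^ 3 / (real (P n))\<^sup>2 - (real (K n) ^ 3 / (real (P n))\<^sup>2)\<^sup>2 / 2 \<le> 1 - s_rkg (K n) (P n)
      \<and> 1 - s_rkg (K n) (P n) \<le> real (K n) ^ 3 / (real (P n))\<^sup>2 / (1 - 2 * real (K n) / real (P n))\<^sup>2"
    by eventually_elim (use pos one_minus_s_rkg_bounds in \<open>auto intro!: divide_pos_pos\<close>)
  have w: "((\<lambda>n. real (K n) / real (P n)) \<longlongrightarrow> 0) F"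
    using K_div_P_tendsto_0[OF _ lim] scaling by auto
  have "real (K n) ^ 3 / (real (P n))\<^sup>2 = real (K n) ^ 2 / real (P n) * (real (K n) / real (P n))" for n
    by (simp add: power2_eq_square power3_eq_cube)
  then show "((\<lambda>n. real (K n) ^ 3 / (real (P n))\<^sup>2) \<longlongrightarrow> 0) F"
    using tendsto_mult[OF lim w] by simp
  have "((\<lambda>n. 2 * real (K n) / real (P n)) \<longlongrightarrow> 0) F"
    using tendsto_mult_right_zero[OF w, of 2] by simp
  from tendsto_power[OF tendsto_diff[OF tendsto_const this], of 1 2]
  show "((\<lambda>n. (1 - 2 * real (K n) / real (P n))\<^sup>2) \<longlongrightarrow> 1) F" by simp
qed

lemma beta_div_tau_rkg_eq_weighted_mean:
  assumes "1 \<le> K" "3 * K \<le> P"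
  defines "u \<equiv> real K ^ 2 / real P" and "t \<equiv> real K ^ 3 / (real P)\<^sup>2"
  shows "beta_rkg K P / tau_rkg K P
    = (t * (q_rkg K P ^ 3 * ((1 - s_rkg K P) / t)) + u ^ 3 * ((1 - q_rkg K P) / u) ^ 3) / (t + u ^ 3)"
proof -
  have "t \<noteq> 0" "u \<noteq> 0" using assms by (simp_all add: u_def t_def)
  then have "t * (q_rkg K P ^ 3 * ((1 - s_rkg K P) / t)) + u ^ 3 * ((1 - q_rkg K P) / u) ^ 3
      = beta_rkg K P"
    using assms(2) by (simp add: beta_rkg_eq power_divide)
  moreover have "tau_rkg K P = t + u ^ 3" by (simp add: tau_rkg_def t_def u_def)
  ultimately show ?thesis by simp
qed

theorem proposition3:
  fixes K P :: "nat \<Rightarrow> nat"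
  assumes scaling: "\<And>n. 1 \<le> K n \<and> K n \<le> P n"
    and lim: "(\<lambda>n. real (K n) ^ 2 / real (P n)) \<longlonglongrightarrow> 0"
  shows "(\<lambda>n. beta_rkg (K n) (P n) / tau_rkg (K n) (P n)) \<longlonglongrightarrow> 1"
proof -
  define q where "q n = q_rkg (K n) (P n)" for n
  define s where "s n = s_rkg (K n) (P n)" for n
  define u where "u n = real (K n) ^ 2 / real (P n)" for n
  define t where "t n = real (K n) ^ 3 / (real (P n))\<^sup>2" for n
  have pos: "0 < u n" "0 < t n" for n using scaling[of n] by (simp_all add: u_def t_def)
  have Q: "(\<lambda>n. (1 - q n) / u n) \<longlonglongrightarrow> 1"
    unfolding q_def u_def by (rule one_minus_q_rkg_asymp[OF scaling lim])
  have S: "(\<lambda>n. (1 - s n) / t n) \<longlonglongrightarrow> 1"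
    unfolding s_def t_def by (rule one_minus_s_rkg_asymp[OF scaling lim])
  have "(\<lambda>n. 1 - u n * ((1 - q n) / u n)) \<longlonglongrightarrow> 1 - 0 * 1"
    using lim Q unfolding u_def by (intro tendsto_intros)
  then have "q \<longlonglongrightarrow> 1" using pos(1) by (simp add: less_imp_neq[symmetric])
  then have "(\<lambda>n. q n ^ 3 * ((1 - s n) / t n)) \<longlonglongrightarrow> 1 ^ 3 * 1"
    using S by (intro tendsto_intros)
  moreover have "(\<lambda>n. ((1 - q n) / u n) ^ 3) \<longlonglongrightarrow> 1 ^ 3"
    using Q by (intro tendsto_intros)
  ultimately have mean: "(\<lambda>n. (t n * (q n ^ 3 * ((1 - s n) / t n)) + u n ^ 3 * ((1 - q n) / u n) ^ 3)
      / (t n + u n ^ 3)) \<longlonglongrightarrow> 1" (is "?mean \<longlonglongrightarrow> 1")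
    using pos by (intro tendsto_weighted_mean) auto
  have "\<forall>\<^sub>F n in sequentially. 3 * K n \<le> P n"
    using scaling lim by (intro eventually_mult_le_if_sq_div_tendsto_0) auto
  then have "\<forall>\<^sub>F n in sequentially. beta_rkg (K n) (P n) / tau_rkg (K n) (P n) = ?mean n"
    by eventually_elim
      (use scaling in \<open>simp add: beta_div_tau_rkg_eq_weighted_mean q_def s_def u_def t_def\<close>)
  then show ?thesis using mean by (rule tendsto_cong[THEN iffD2])
qed

end
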